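(* Let $X$ be a finite connected poset, $F$ a field and $\varphi$ a Jordan automorphism of $I(X,F)$ such that $\varphi(e_x)=e_{\lambda(x)}$ for all $x\in X$, for some bijection $\lambda:X\to X$. Then $\lambda$ is either an order automorphism or an order anti-automorphism of $X$.
   Context: $I(X,F)$ is the incidence algebra of the locally finite poset $X$ over $F$ (functions $f:X\times X\to F$ vanishing unless $x\le y$, with product $(fg)(x,y)=\sum_{x\le z\le y}f(x,z)g(z,y)$). For $x\le y$, $e_{xy}$ is the function equal to $1$ at $(x,y)$ and $0$ elsewhere, and $e_x:=e_{xx}$. A poset is connected if any two elements are joined by a finite sequence of elements in which consecutive elements are comparable. A Jordan automorphism of an associative algebra $A$ is a bijective linear map $\varphi:A\to A$ with $\varphi(a^2)=\varphi(a)^2$ and $\varphi(aba)=\varphi(a)\varphi(b)\varphi(a)$ for all $a,b\in A$. An order automorphism (resp. anti-automorphism) of $X$ is a bijection $\lambda$ such that $\lambda$ and $\lambda^{-1}$ are order-preserving (resp. order-reversing). *)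

theory Defs
  imports Main
begin

definition poset_on :: "'a set \<Rightarrow> ('a \<Rightarrow> 'a \<Rightarrow> bool) \<Rightarrow> bool" where
  "poset_on X le \<longleftrightarrow>
     (\<forall>x\<in>X. le x x) \<and>
     (\<forall>x\<in>X. \<forall>y\<in>X. le x y \<and> le y x \<longrightarrow> x = y) \<and>
     (\<forall>x\<in>X. \<forall>y\<in>X. \<forall>z\<in>X. le x y \<and> le y z \<longrightarrow> le x z)"

definition connected_poset :: "'a set \<Rightarrow> ('a \<Rightarrow> 'a \<Rightarrow> bool) \<Rightarrow> bool" where
  "connected_poset X le \<longleftrightarrow>
     (\<forall>x\<in>X. \<forall>y\<in>X. \<exists>xs. xs \<noteq> [] \<and> hd xs = x \<and> last xs = y \<and> set xs \<subseteq> X \<and>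
        (\<forall>i. Suc i < length xs \<longrightarrow> le (xs ! i) (xs ! Suc i) \<or> le (xs ! Suc i) (xs ! i)))"

text \<open>The incidence algebra I(X,F): functions X \<times> X \<rightarrow> F vanishing unless x \<le> y
(represented as functions on the whole type, zero outside X \<times> X).\<close>
definition incidence :: "'a set \<Rightarrow> ('a \<Rightarrow> 'a \<Rightarrow> bool) \<Rightarrow> ('a \<Rightarrow> 'a \<Rightarrow> 'f::field) set" where
  "incidence X le = {f. \<forall>x y. \<not> (x \<in> X \<and> y \<in> X \<and> le x y) \<longrightarrow> f x y = 0}"

definition inc_mult :: "'a set \<Rightarrow> ('a \<Rightarrow> 'a \<Rightarrow> bool) \<Rightarrow> ('a \<Rightarrow> 'a \<Rightarrow> 'f::field)
    \<Rightarrow> ('a \<Rightarrow> 'a \<Rightarrow> 'f) \<Rightarrow> ('a \<Rightarrow> 'a \<Rightarrow> 'f)" where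
  "inc_mult X le f g = (\<lambda>x y. if x \<in> X \<and> y \<in> X \<and> le x y
      then (\<Sum>z\<in>{z\<in>X. le x z \<and> le z y}. f x z * g z y) else 0)"

definition e_unit :: "'a \<Rightarrow> 'a \<Rightarrow> ('a \<Rightarrow> 'a \<Rightarrow> 'f::field)" where
  "e_unit x y = (\<lambda>u v. if u = x \<and> v = y then 1 else 0)"

definition jordan_automorphism :: "'a set \<Rightarrow> ('a \<Rightarrow> 'a \<Rightarrow> bool)
    \<Rightarrow> (('a \<Rightarrow> 'a \<Rightarrow> 'f::field) \<Rightarrow> ('a \<Rightarrow> 'a \<Rightarrow> 'f)) \<Rightarrow> bool" where
  "jordan_automorphism X le \<phi> \<longleftrightarrow>
     bij_betw \<phi> (incidence X le) (incidence X le) \<and>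
     (\<forall>f\<in>incidence X le. \<forall>g\<in>incidence X le. \<phi> (\<lambda>x y. f x y + g x y) = (\<lambda>x y. \<phi> f x y + \<phi> g x y)) \<and>
     (\<forall>c. \<forall>f\<in>incidence X le. \<phi> (\<lambda>x y. c * f x y) = (\<lambda>x y. c * \<phi> f x y)) \<and>
     (\<forall>a\<in>incidence X le. \<phi> (inc_mult X le a a) = inc_mult X le (\<phi> a) (\<phi> a)) \<and>
     (\<forall>a\<in>incidence X le. \<forall>b\<in>incidence X le.
        \<phi> (inc_mult X le (inc_mult X le a b) a)
          = inc_mult X le (inc_mult X le (\<phi> a) (\<phi> b)) (\<phi> a))"

definition order_automorphism :: "'a set \<Rightarrow> ('a \<Rightarrow> 'a \<Rightarrow> bool) \<Rightarrow> ('a \<Rightarrow> 'a) \<Rightarrow> bool" where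
  "order_automorphism X le lam \<longleftrightarrow> bij_betw lam X X \<and>
     (\<forall>x\<in>X. \<forall>y\<in>X. le x y \<longrightarrow> le (lam x) (lam y)) \<and>
     (\<forall>x\<in>X. \<forall>y\<in>X. le x y \<longrightarrow> le (the_inv_into X lam x) (the_inv_into X lam y))"

definition order_anti_automorphism :: "'a set \<Rightarrow> ('a \<Rightarrow> 'a \<Rightarrow> bool) \<Rightarrow> ('a \<Rightarrow> 'a) \<Rightarrow> bool" where
  "order_anti_automorphism X le lam \<longleftrightarrow> bij_betw lam X X \<and>
     (\<forall>x\<in>X. \<forall>y\<in>X. le x y \<longrightarrow> le (lam y) (lam x)) \<and>
     (\<forall>x\<in>X. \<forall>y\<in>X. le x y \<longrightarrow> le (the_inv_into X lam y) (the_inv_into X lam x))"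

end

theory Submission
  imports Defs
begin

text \<open>A Jordan automorphism preserves the Jordan product \<open>a \<circ> b = ab + ba\<close>. For \<open>x < y\<close> the
  unit \<open>e_xy\<close> is fixed by \<open>e_x \<circ> -\<close> and by \<open>e_y \<circ> -\<close>, so \<open>\<phi>(e_xy)\<close> is fixed by
  \<open>e_\<lambda>x \<circ> -\<close> and \<open>e_\<lambda>y \<circ> -\<close>, which confines its support to one of the positions \<open>(\<lambda>x, \<lambda>y)\<close>,
  \<open>(\<lambda>y, \<lambda>x)\<close>: thus \<open>\<lambda>\<close> maps strictly comparable pairs to strictly comparable pairs, and by
  finiteness it also reflects comparability. For \<open>x < y < z\<close> the identity
  \<open>e_xz = e_xy \<circ> e_yz\<close> shows that the images of the edges \<open>xy\<close> and \<open>yz\<close> are oriented alike;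
  from this, any two edges with a common endpoint are oriented alike, and connectedness
  propagates one orientation to all edges of \<open>X\<close>.\<close>

definition inc_jordan :: "'a set \<Rightarrow> ('a \<Rightarrow> 'a \<Rightarrow> bool) \<Rightarrow> ('a \<Rightarrow> 'a \<Rightarrow> 'f::field)
    \<Rightarrow> ('a \<Rightarrow> 'a \<Rightarrow> 'f) \<Rightarrow> ('a \<Rightarrow> 'a \<Rightarrow> 'f)" where
  "inc_jordan X le a b = (\<lambda>p q. inc_mult X le a b p q + inc_mult X le b a p q)"

lemma inc_mult_in_incidence: "inc_mult X le f g \<in> incidence X le"
  by (simp add: incidence_def inc_mult_def)

lemma inc_jordan_in_incidence: "inc_jordan X le f g \<in> incidence X le"
  by (simp add: incidence_def inc_mult_def inc_jordan_def)

lemma add_in_incidence: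
  "f \<in> incidence X le \<Longrightarrow> g \<in> incidence X le \<Longrightarrow> (\<lambda>x y. f x y + g x y) \<in> incidence X le"
  by (simp add: incidence_def)

lemma e_unit_in_incidence: "x \<in> X \<Longrightarrow> y \<in> X \<Longrightarrow> le x y \<Longrightarrow> e_unit x y \<in> incidence X le"
  by (auto simp: incidence_def e_unit_def)

lemma e_unit_nonzero: "e_unit x y \<noteq> (\<lambda>_ _. 0 :: 'f::field)"
  by (metis e_unit_def one_neq_zero)

lemma inc_mult_add_left:
  "inc_mult X le (\<lambda>x y. f x y + g x y) h = (\<lambda>x y. inc_mult X le f h x y + inc_mult X le g h x y)"
  by (auto simp: inc_mult_def fun_eq_iff sum.distrib distrib_right)

lemma inc_mult_add_right:
  "inc_mult X le h (\<lambda>x y. f x y + g x y) = (\<lambda>x y. inc_mult X le h f x y + inc_mult X le h g x y)"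
  by (auto simp: inc_mult_def fun_eq_iff sum.distrib distrib_left)

text \<open>The inner sum is kept as a \<open>\<lambda>\<close>-term so that additivity of \<open>\<phi>\<close> applies to it literally.\<close>
lemma inc_mult_square_add:
  "inc_mult X le (\<lambda>x y. a x y + b x y) (\<lambda>x y. a x y + b x y)
     = (\<lambda>x y. (\<lambda>x y. inc_mult X le a a x y + inc_mult X le b b x y) x y + inc_jordan X le a b x y)"
  by (simp add: inc_mult_add_left inc_mult_add_right inc_jordan_def fun_eq_iff add_ac)

lemma inc_mult_e_unit_e_unit:
  assumes "finite X" "poset_on X le" "a \<in> X" "b \<in> X" "d \<in> X" "le a b" "le c d"
  shows "inc_mult X le (e_unit a b) (e_unit c d) = (if b = c then e_unit a d else (\<lambda>_ _. 0))"
proof (intro ext)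
  fix p q
  have sum: "(\<Sum>z\<in>{z\<in>X. le p z \<and> le z q}. e_unit a b p z * e_unit c d z q)
      = (\<Sum>z\<in>{z\<in>X. le p z \<and> le z q}. if z = b then (if p = a \<and> b = c \<and> q = d then 1 else 0) else 0)"
    by (rule sum.cong) (auto simp: e_unit_def)
  have "b = c \<Longrightarrow> le a d" using assms unfolding poset_on_def by blast
  then show "inc_mult X le (e_unit a b) (e_unit c d) p q = (if b = c then e_unit a d else (\<lambda>_ _. 0)) p q"
    unfolding inc_mult_def sum using assms by (auto simp: e_unit_def)
qed

lemma inc_jordan_e_unit_idempotent:
  assumes "finite X" "u \<in> X" "le u u" "A \<in> incidence X le"
  shows "inc_jordan X le (e_unit u u) A
           = (\<lambda>p q. (if p = u then A p q else 0) + (if q = u then A p q else 0))"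
proof (intro ext)
  fix p q
  have left: "(\<Sum>z\<in>{z\<in>X. le p z \<and> le z q}. e_unit u u p z * A z q)
      = (\<Sum>z\<in>{z\<in>X. le p z \<and> le z q}. if z = u then (if p = u then A u q else 0) else 0)"
    by (rule sum.cong) (auto simp: e_unit_def)
  have right: "(\<Sum>z\<in>{z\<in>X. le p z \<and> le z q}. A p z * e_unit u u z q)
      = (\<Sum>z\<in>{z\<in>X. le p z \<and> le z q}. if z = u then (if q = u then A p u else 0) else 0)"
    by (rule sum.cong) (auto simp: e_unit_def)
  show "inc_jordan X le (e_unit u u) A p q
           = (if p = u then A p q else 0) + (if q = u then A p q else 0)"
    unfolding inc_jordan_def inc_mult_def left right using assms by (auto simp: incidence_def)
qed

lemma inc_jordan_e_unit_fixed_entry: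
  fixes A :: "'a \<Rightarrow> 'a \<Rightarrow> 'f::field"
  assumes "finite X" "u \<in> X" "le u u" "A \<in> incidence X le"
    and fixed: "inc_jordan X le (e_unit u u) A = A" and nz: "A p q \<noteq> 0"
  shows "(p = u) \<noteq> (q = u)"
proof -
  have "A p q = (if p = u then A p q else 0) + (if q = u then A p q else 0)"
    using fixed inc_jordan_e_unit_idempotent[OF assms(1-4)] by metis
  moreover have "A p q \<noteq> A p q + A p q" using nz by (metis add_cancel_left_right)
  ultimately show ?thesis using nz by (cases "p = u"; cases "q = u") auto
qed

lemma inc_jordan_single_entries_zero:
  assumes "\<And>p q. B p q \<noteq> 0 \<Longrightarrow> p = a \<and> q = b" "\<And>p q. C p q \<noteq> 0 \<Longrightarrow> p = c \<and> q = d"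
    and "b \<noteq> c" "d \<noteq> a"
  shows "inc_jordan X le B C = (\<lambda>_ _. 0)"
proof -
  have BC: "B p z * C z q = 0" for p q z
    using assms(1)[of p z] assms(2)[of z q] assms(3) by (metis mult_zero_left mult_zero_right)
  have CB: "C p z * B z q = 0" for p q z
    using assms(2)[of p z] assms(1)[of z q] assms(4) by (metis mult_zero_left mult_zero_right)
  have "inc_mult X le B C = (\<lambda>_ _. 0)" "inc_mult X le C B = (\<lambda>_ _. 0)"
    by (auto simp: inc_mult_def fun_eq_iff BC CB intro!: sum.neutral)
  then show ?thesis by (simp add: inc_jordan_def)
qed

lemma jordan_automorphism_add:
  "jordan_automorphism X le \<phi> \<Longrightarrow> f \<in> incidence X le \<Longrightarrow> g \<in> incidence X le
    \<Longrightarrow> \<phi> (\<lambda>x y. f x y + g x y) = (\<lambda>x y. \<phi> f x y + \<phi> g x y)"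
  by (simp add: jordan_automorphism_def)

lemma jordan_automorphism_square:
  "jordan_automorphism X le \<phi> \<Longrightarrow> a \<in> incidence X le
    \<Longrightarrow> \<phi> (inc_mult X le a a) = inc_mult X le (\<phi> a) (\<phi> a)"
  by (simp add: jordan_automorphism_def)

lemma jordan_automorphism_in_incidence:
  "jordan_automorphism X le \<phi> \<Longrightarrow> f \<in> incidence X le \<Longrightarrow> \<phi> f \<in> incidence X le"
  by (auto simp: jordan_automorphism_def bij_betw_def)

lemma jordan_automorphism_zero:
  assumes "jordan_automorphism X le \<phi>"
  shows "\<phi> (\<lambda>_ _. 0) = (\<lambda>_ _. 0)"
proof -
  have scale: "\<forall>c. \<forall>f\<in>incidence X le. \<phi> (\<lambda>x y. c * f x y) = (\<lambda>x y. c * \<phi> f x y)"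
    using assms by (simp add: jordan_automorphism_def)
  have "(\<lambda>_ _. 0) \<in> incidence X le" by (simp add: incidence_def)
  from bspec[OF spec[OF scale, of 0] this] show ?thesis by simp
qed

lemma jordan_automorphism_nonzero:
  assumes ja: "jordan_automorphism X le \<phi>" and f: "f \<in> incidence X le" "f \<noteq> (\<lambda>_ _. 0)"
  shows "\<phi> f \<noteq> (\<lambda>_ _. 0)"
proof
  assume "\<phi> f = (\<lambda>_ _. 0)"
  then have "\<phi> f = \<phi> (\<lambda>_ _. 0)" using jordan_automorphism_zero[OF ja] by simp
  moreover have "inj_on \<phi> (incidence X le)" using ja by (simp add: jordan_automorphism_def bij_betw_def)
  moreover have "(\<lambda>_ _. 0) \<in> incidence X le" by (simp add: incidence_def)
  ultimately show False using f inj_onD by metis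
qed

text \<open>Linearise \<open>\<phi>(s\<^sup>2) = \<phi>(s)\<^sup>2\<close> at \<open>s = a + b\<close>.\<close>
lemma jordan_automorphism_inc_jordan:
  assumes ja: "jordan_automorphism X le \<phi>" and a: "a \<in> incidence X le" and b: "b \<in> incidence X le"
  shows "\<phi> (inc_jordan X le a b) = inc_jordan X le (\<phi> a) (\<phi> b)"
proof (intro ext)
  fix x y
  let ?s = "\<lambda>x y. a x y + b x y"
  have s: "?s \<in> incidence X le" using a b by (rule add_in_incidence)
  have "\<phi> (inc_mult X le ?s ?s)
      = (\<lambda>x y. (\<phi> (inc_mult X le a a) x y + \<phi> (inc_mult X le b b) x y) + \<phi> (inc_jordan X le a b) x y)"
    unfolding inc_mult_square_add
    by (simp add: jordan_automorphism_add[OF ja] add_in_incidence inc_mult_in_incidence inc_jordan_in_incidence)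
  moreover have "\<phi> (inc_mult X le ?s ?s)
      = (\<lambda>x y. (\<lambda>x y. inc_mult X le (\<phi> a) (\<phi> a) x y + inc_mult X le (\<phi> b) (\<phi> b) x y) x y
               + inc_jordan X le (\<phi> a) (\<phi> b) x y)"
    unfolding jordan_automorphism_square[OF ja s] jordan_automorphism_add[OF ja a b]
    by (rule inc_mult_square_add)
  ultimately have "(\<phi> (inc_mult X le a a) x y + \<phi> (inc_mult X le b b) x y) + \<phi> (inc_jordan X le a b) x y
      = (inc_mult X le (\<phi> a) (\<phi> a) x y + inc_mult X le (\<phi> b) (\<phi> b) x y)
          + inc_jordan X le (\<phi> a) (\<phi> b) x y"
    by (metis (no_types))
  then show "\<phi> (inc_jordan X le a b) x y = inc_jordan X le (\<phi> a) (\<phi> b) x y"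
    unfolding jordan_automorphism_square[OF ja a] jordan_automorphism_square[OF ja b]
    by (rule add_left_imp_eq)
qed

lemma rtranclp_hd_last:
  "xs \<noteq> [] \<Longrightarrow> \<forall>i. Suc i < length xs \<longrightarrow> R (xs ! i) (xs ! Suc i) \<Longrightarrow> R\<^sup>*\<^sup>* (hd xs) (last xs)"
proof (induction xs)
  case (Cons u ys)
  show ?case
  proof (cases ys)
    case (Cons v zs)
    then have "R u v" using spec[OF Cons.prems(2), of 0] by simp
    moreover have "R\<^sup>*\<^sup>* (hd ys) (last ys)"
    proof (rule Cons.IH)
      show "\<forall>i. Suc i < length ys \<longrightarrow> R (ys ! i) (ys ! Suc i)"
        using Cons.prems(2) by (metis length_Cons nth_Cons_Suc Suc_less_eq)
    qed (simp add: \<open>ys = v # zs\<close>)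
    ultimately show ?thesis using \<open>ys = v # zs\<close> by (simp add: converse_rtranclp_into_rtranclp)
  qed simp
qed simp

lemma connected_poset_rtranclp:
  assumes "connected_poset X le" "x \<in> X" "y \<in> X"
  shows "(\<lambda>u v. u \<in> X \<and> v \<in> X \<and> (le u v \<or> le v u))\<^sup>*\<^sup>* x y"
proof -
  obtain xs where "xs \<noteq> []" "hd xs = x" "last xs = y" "set xs \<subseteq> X"
      "\<forall>i. Suc i < length xs \<longrightarrow> le (xs ! i) (xs ! Suc i) \<or> le (xs ! Suc i) (xs ! i)"
    using assms unfolding connected_poset_def by blast
  moreover have "xs ! i \<in> X" if "i < length xs" for i
    using that \<open>set xs \<subseteq> X\<close> nth_mem by blast
  ultimately show ?thesis
    using rtranclp_hd_last[of xs "\<lambda>u v. u \<in> X \<and> v \<in> X \<and> (le u v \<or> le v u)"]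
    by (metis Suc_lessD)
qed

locale finite_poset =
  fixes X :: "'a set" and le :: "'a \<Rightarrow> 'a \<Rightarrow> bool"
  assumes finite_X: "finite X" and poset: "poset_on X le"
begin

abbreviation lt :: "'a \<Rightarrow> 'a \<Rightarrow> bool" where
  "lt x y \<equiv> le x y \<and> x \<noteq> y"

lemma poset_refl: "x \<in> X \<Longrightarrow> le x x"
  using poset by (simp add: poset_on_def)

lemma poset_antisym: "x \<in> X \<Longrightarrow> y \<in> X \<Longrightarrow> le x y \<Longrightarrow> le y x \<Longrightarrow> x = y"
  using poset unfolding poset_on_def by blast

lemma poset_trans: "x \<in> X \<Longrightarrow> y \<in> X \<Longrightarrow> z \<in> X \<Longrightarrow> le x y \<Longrightarrow> le y z \<Longrightarrow> le x z"
  using poset unfolding poset_on_def by blast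

lemma lt_trans: "x \<in> X \<Longrightarrow> y \<in> X \<Longrightarrow> z \<in> X \<Longrightarrow> lt x y \<Longrightarrow> lt y z \<Longrightarrow> lt x z"
  using poset_trans poset_antisym by blast

lemma inc_mult_e_unit:
  "a \<in> X \<Longrightarrow> b \<in> X \<Longrightarrow> d \<in> X \<Longrightarrow> le a b \<Longrightarrow> le c d
    \<Longrightarrow> inc_mult X le (e_unit a b) (e_unit c d) = (if b = c then e_unit a d else (\<lambda>_ _. 0))"
  by (rule inc_mult_e_unit_e_unit[OF finite_X poset])

lemma inc_jordan_e_unit_source:
  "x \<in> X \<Longrightarrow> y \<in> X \<Longrightarrow> lt x y \<Longrightarrow> inc_jordan X le (e_unit x x) (e_unit x y) = e_unit x y"
  by (auto simp: inc_jordan_def inc_mult_e_unit poset_refl)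

lemma inc_jordan_e_unit_target:
  "x \<in> X \<Longrightarrow> y \<in> X \<Longrightarrow> lt x y \<Longrightarrow> inc_jordan X le (e_unit y y) (e_unit x y) = e_unit x y"
  by (auto simp: inc_jordan_def inc_mult_e_unit poset_refl)

lemma inc_jordan_e_unit_chain:
  "x \<in> X \<Longrightarrow> y \<in> X \<Longrightarrow> z \<in> X \<Longrightarrow> lt x y \<Longrightarrow> lt y z
    \<Longrightarrow> inc_jordan X le (e_unit x y) (e_unit y z) = e_unit x z"
  using lt_trans[of x y z] by (auto simp: inc_jordan_def inc_mult_e_unit)

end

locale poset_bijection = finite_poset +
  fixes lam :: "'a \<Rightarrow> 'a"
  assumes lam_bij: "bij_betw lam X X"
begin

lemma lam_in: "x \<in> X \<Longrightarrow> lam x \<in> X"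
  using lam_bij by (auto simp: bij_betw_def)

lemma lam_inj: "x \<in> X \<Longrightarrow> y \<in> X \<Longrightarrow> lam x = lam y \<Longrightarrow> x = y"
  using lam_bij by (simp add: bij_betw_def inj_on_def)

lemma lam_surj: "x \<in> X \<Longrightarrow> \<exists>a\<in>X. x = lam a"
  using lam_bij by (auto simp: bij_betw_def)

lemma the_inv_into_lam: "a \<in> X \<Longrightarrow> the_inv_into X lam (lam a) = a"
  using lam_bij by (simp add: bij_betw_def the_inv_into_f_f)

end

locale strict_comparability_map = poset_bijection +
  assumes image_comparable:
      "x \<in> X \<Longrightarrow> y \<in> X \<Longrightarrow> lt x y \<Longrightarrow> lt (lam x) (lam y) \<or> lt (lam y) (lam x)"
    and chain_orientation:
      "x \<in> X \<Longrightarrow> y \<in> X \<Longrightarrow> z \<in> X \<Longrightarrow> lt x y \<Longrightarrow> lt y z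
        \<Longrightarrow> lt (lam x) (lam y) \<longleftrightarrow> lt (lam y) (lam z)"
begin

lemma image_reversed_iff:
  "x \<in> X \<Longrightarrow> y \<in> X \<Longrightarrow> lt x y \<Longrightarrow> lt (lam y) (lam x) \<longleftrightarrow> \<not> lt (lam x) (lam y)"
  using image_comparable poset_antisym lam_in by blast

text \<open>\<open>lam\<close> maps the finite set of strictly comparable pairs injectively into itself, hence onto.\<close>
lemma comparable_if_image_lt:
  assumes x: "x \<in> X" and y: "y \<in> X" and lt: "lt (lam x) (lam y)"
  shows "lt x y \<or> lt y x"
proof -
  define S where "S = {(a, b). a \<in> X \<and> b \<in> X \<and> a \<noteq> b \<and> (le a b \<or> le b a)}"
  define f where "f = map_prod lam lam"
  have "finite S"
    by (rule finite_subset[of _ "X \<times> X"]) (auto simp: S_def finite_X)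
  moreover have "f ` S \<subseteq> S"
    using image_comparable lam_in lam_inj by (fastforce simp: S_def f_def)
  moreover have "inj_on f S"
    by (rule inj_onI) (auto simp: f_def S_def dest: lam_inj)
  ultimately have "f ` S = S" by (rule endo_inj_surj)
  moreover have "(lam x, lam y) \<in> S" using lt lam_in x y by (auto simp: S_def)
  ultimately obtain a b where "(a, b) \<in> S" "(lam x, lam y) = f (a, b)"
    by (metis imageE surj_pair)
  then have "(a, b) \<in> S" "lam x = lam a" "lam y = lam b" by (simp_all add: f_def)
  then show ?thesis using x y lam_inj by (auto simp: S_def)
qed

lemma orientation_common_bottom:
  assumes x: "x \<in> X" and y: "y \<in> X" and z: "z \<in> X" and xy: "lt x y" and xz: "lt x z"
  shows "lt (lam x) (lam y) \<longleftrightarrow> lt (lam x) (lam z)"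
proof -
  have False if y: "y \<in> X" and z: "z \<in> X" and xy: "lt x y" and xz: "lt x z"
    and up: "lt (lam x) (lam y)" and down: "\<not> lt (lam x) (lam z)" for y z
  proof -
    have "lt (lam z) (lam x)" using image_reversed_iff[OF x z xz] down by blast
    then have zy: "lt (lam z) (lam y)" using lt_trans lam_in x y z up by blast
    from comparable_if_image_lt[OF z y zy] show False
    proof
      assume "lt z y"
      then show False using chain_orientation[OF x z y xz] zy down by blast
    next
      assume "lt y z"
      then show False using chain_orientation[OF x y z xy] zy up poset_antisym lam_in y z by blast
    qed
  qed
  then show ?thesis using y z xy xz by blast
qed

lemma orientation_common_top:
  assumes x: "x \<in> X" and y: "y \<in> X" and z: "z \<in> X" and yx: "lt y x" and zx: "lt z x"
  shows "lt (lam y) (lam x) \<longleftrightarrow> lt (lam z) (lam x)"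
proof -
  have False if y: "y \<in> X" and z: "z \<in> X" and yx: "lt y x" and zx: "lt z x"
    and up: "lt (lam y) (lam x)" and down: "\<not> lt (lam z) (lam x)" for y z
  proof -
    have "lt (lam x) (lam z)" using image_reversed_iff[OF z x zx] down by blast
    then have yz: "lt (lam y) (lam z)" using lt_trans lam_in x y z up by blast
    from comparable_if_image_lt[OF y z yz] show False
    proof
      assume "lt y z"
      then show False using chain_orientation[OF y z x _ zx] yz down by blast
    next
      assume "lt z y"
      then show False using chain_orientation[OF z y x _ yx] yz up poset_antisym lam_in y z by blast
    qed
  qed
  then show ?thesis using y z yx zx by blast
qed

lemma orientation_incident_edges:
  assumes "a \<in> X" "b \<in> X" "c \<in> X" "d \<in> X" "lt a b" "lt c d"
    and "a = c \<or> a = d \<or> b = c \<or> b = d"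
  shows "lt (lam a) (lam b) \<longleftrightarrow> lt (lam c) (lam d)"
  using assms orientation_common_bottom orientation_common_top chain_orientation by blast

lemma uniform_orientation:
  assumes conn: "connected_poset X le"
  shows "\<exists>up. \<forall>c\<in>X. \<forall>d\<in>X. lt c d \<longrightarrow> (lt (lam c) (lam d) \<longleftrightarrow> up)"
proof (cases "\<exists>a\<in>X. \<exists>b\<in>X. lt a b")
  case True
  then obtain a b where a: "a \<in> X" and b: "b \<in> X" and ab: "lt a b" by blast
  define up where "up = lt (lam a) (lam b)"
  define incident where "incident u \<longleftrightarrow>
      (\<forall>c\<in>X. \<forall>d\<in>X. lt c d \<and> (u = c \<or> u = d) \<longrightarrow> (lt (lam c) (lam d) \<longleftrightarrow> up))" for u
  have "incident u" if "u \<in> X" for u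
    using connected_poset_rtranclp[OF conn a that]
  proof (induction rule: rtranclp_induct)
    case base
    show ?case
      unfolding incident_def up_def
    proof (intro ballI impI)
      fix c d assume "c \<in> X" "d \<in> X" "lt c d \<and> (a = c \<or> a = d)"
      then show "lt (lam c) (lam d) \<longleftrightarrow> lt (lam a) (lam b)"
        using a b ab by (intro orientation_incident_edges) auto
    qed
  next
    case (step u v)
    show ?case
    proof (cases "u = v")
      case True
      then show ?thesis using step.IH by simp
    next
      case False
      then obtain m n where mn: "m \<in> X" "n \<in> X" "lt m n" "(m = u \<and> n = v) \<or> (m = v \<and> n = u)"
        using step.hyps(2) by fastforce
      then have "lt (lam m) (lam n) \<longleftrightarrow> up" using step.IH unfolding incident_def by auto
      then show ?thesis
        unfolding incident_def
      proof (intro ballI impI)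
        fix c d assume "c \<in> X" "d \<in> X" "lt c d \<and> (v = c \<or> v = d)"
        then have "lt (lam c) (lam d) \<longleftrightarrow> lt (lam m) (lam n)"
          using mn by (intro orientation_incident_edges) auto
        with \<open>lt (lam m) (lam n) \<longleftrightarrow> up\<close> show "lt (lam c) (lam d) \<longleftrightarrow> up" by blast
      qed
    qed
  qed
  then show ?thesis unfolding incident_def by (intro exI[of _ up]) blast
next
  case False
  then show ?thesis by blast
qed

lemma order_automorphism_if_preserving:
  assumes pres: "\<And>c d. c \<in> X \<Longrightarrow> d \<in> X \<Longrightarrow> lt c d \<Longrightarrow> lt (lam c) (lam d)"
  shows "order_automorphism X le lam"
  unfolding order_automorphism_def
proof (intro conjI ballI impI)
  fix x y assume "x \<in> X" "y \<in> X" "le x y"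
  then show "le (lam x) (lam y)" using pres poset_refl lam_in by (cases "x = y") auto
next
  fix x y assume "x \<in> X" "y \<in> X" "le x y"
  then obtain a b where ab: "a \<in> X" "b \<in> X" "x = lam a" "y = lam b" "le (lam a) (lam b)"
    using lam_surj by blast
  have "le a b"
  proof (cases "a = b")
    case False
    then have "lt (lam a) (lam b)" using ab lam_inj by blast
    moreover have "\<not> lt (lam b) (lam a)" using ab(5) poset_antisym lam_in ab(1,2) by blast
    ultimately show ?thesis using comparable_if_image_lt[OF ab(1,2)] pres ab(1,2) by blast
  qed (use poset_refl ab(1) in simp)
  then show "le (the_inv_into X lam x) (the_inv_into X lam y)" by (simp add: ab the_inv_into_lam)
qed (rule lam_bij)

lemma order_anti_automorphism_if_reversing:
  assumes rev: "\<And>c d. c \<in> X \<Longrightarrow> d \<in> X \<Longrightarrow> lt c d \<Longrightarrow> lt (lam d) (lam c)"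
  shows "order_anti_automorphism X le lam"
  unfolding order_anti_automorphism_def
proof (intro conjI ballI impI)
  fix x y assume "x \<in> X" "y \<in> X" "le x y"
  then show "le (lam y) (lam x)" using rev poset_refl lam_in by (cases "x = y") auto
next
  fix x y assume "x \<in> X" "y \<in> X" "le x y"
  then obtain a b where ab: "a \<in> X" "b \<in> X" "x = lam a" "y = lam b" "le (lam a) (lam b)"
    using lam_surj by blast
  have "le b a"
  proof (cases "a = b")
    case False
    then have "lt (lam a) (lam b)" using ab lam_inj by blast
    moreover have "\<not> lt (lam b) (lam a)" using ab(5) poset_antisym lam_in ab(1,2) by blast
    ultimately show ?thesis using comparable_if_image_lt[OF ab(1,2)] rev ab(1,2) by blast
  qed (use poset_refl ab(1) in simp)
  then show "le (the_inv_into X lam y) (the_inv_into X lam x)" by (simp add: ab the_inv_into_lam)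
qed (rule lam_bij)

theorem order_automorphism_or_anti_automorphism:
  assumes "connected_poset X le"
  shows "order_automorphism X le lam \<or> order_anti_automorphism X le lam"
proof -
  obtain up where up: "\<forall>c\<in>X. \<forall>d\<in>X. lt c d \<longrightarrow> (lt (lam c) (lam d) \<longleftrightarrow> up)"
    using uniform_orientation[OF assms] by blast
  show ?thesis
  proof (cases up)
    case True
    then show ?thesis using up by (intro disjI1 order_automorphism_if_preserving) auto
  next
    case False
    then show ?thesis using up image_reversed_iff by (intro disjI2 order_anti_automorphism_if_reversing) auto
  qed
qed

end

locale jordan_automorphism_permuting_units = poset_bijection +
  fixes \<phi> :: "('a \<Rightarrow> 'a \<Rightarrow> 'f::field) \<Rightarrow> ('a \<Rightarrow> 'a \<Rightarrow> 'f)"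
  assumes jordan: "jordan_automorphism X le \<phi>"
    and phi_e_unit_diag: "\<And>x. x \<in> X \<Longrightarrow> \<phi> (e_unit x x) = e_unit (lam x) (lam x)"
begin

lemma phi_e_unit_in_incidence: "x \<in> X \<Longrightarrow> y \<in> X \<Longrightarrow> le x y \<Longrightarrow> \<phi> (e_unit x y) \<in> incidence X le"
  by (rule jordan_automorphism_in_incidence[OF jordan e_unit_in_incidence])

lemma phi_e_unit_nonzero: "x \<in> X \<Longrightarrow> y \<in> X \<Longrightarrow> le x y \<Longrightarrow> \<phi> (e_unit x y) \<noteq> (\<lambda>_ _. 0)"
  by (rule jordan_automorphism_nonzero[OF jordan e_unit_in_incidence e_unit_nonzero])

lemma phi_e_unit_fixed:
  assumes x: "x \<in> X" and y: "y \<in> X" and xy: "lt x y" and u: "u = x \<or> u = y"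
  shows "inc_jordan X le (e_unit (lam u) (lam u)) (\<phi> (e_unit x y)) = \<phi> (e_unit x y)"
proof -
  have "u \<in> X" "inc_jordan X le (e_unit u u) (e_unit x y) = e_unit x y"
    using u x y xy inc_jordan_e_unit_source inc_jordan_e_unit_target by auto
  then show ?thesis
    using jordan_automorphism_inc_jordan[OF jordan e_unit_in_incidence e_unit_in_incidence, of u u x y]
      phi_e_unit_diag x y xy poset_refl by metis
qed

lemma phi_e_unit_entry:
  assumes x: "x \<in> X" and y: "y \<in> X" and xy: "lt x y" and nz: "\<phi> (e_unit x y) p q \<noteq> 0"
  shows "lt p q \<and> ((p = lam x \<and> q = lam y) \<or> (p = lam y \<and> q = lam x))"
proof -
  have A: "\<phi> (e_unit x y) \<in> incidence X le" using phi_e_unit_in_incidence x y xy by blast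
  have "(p = lam x) \<noteq> (q = lam x)" "(p = lam y) \<noteq> (q = lam y)"
    using inc_jordan_e_unit_fixed_entry[OF finite_X lam_in poset_refl[OF lam_in] A phi_e_unit_fixed nz]
      x y xy by blast+
  moreover have "lam x \<noteq> lam y" using lam_inj x y xy by blast
  moreover have "le p q" using A nz by (auto simp: incidence_def)
  ultimately show ?thesis by blast
qed

lemma phi_e_unit_support:
  assumes x: "x \<in> X" and y: "y \<in> X" and xy: "lt x y" and nz: "\<phi> (e_unit x y) p q \<noteq> 0"
  shows "lt (lam x) (lam y) \<Longrightarrow> p = lam x \<and> q = lam y"
    and "lt (lam y) (lam x) \<Longrightarrow> p = lam y \<and> q = lam x"
  using phi_e_unit_entry[OF x y xy nz] poset_antisym lam_in x y by blast+

lemma image_comparable: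
  assumes x: "x \<in> X" and y: "y \<in> X" and xy: "lt x y"
  shows "lt (lam x) (lam y) \<or> lt (lam y) (lam x)"
proof -
  obtain p q where "\<phi> (e_unit x y) p q \<noteq> 0"
    using phi_e_unit_nonzero[OF x y] xy by blast
  then show ?thesis using phi_e_unit_entry[OF x y xy] by blast
qed

text \<open>Otherwise \<open>lam y\<close> is the common top or the common bottom of the two image edges, and
  then the Jordan product of \<open>\<phi>(e_xy)\<close> and \<open>\<phi>(e_yz)\<close>, which is \<open>\<phi>(e_xz) \<noteq> 0\<close>, vanishes.\<close>
lemma chain_orientation:
  assumes x: "x \<in> X" and y: "y \<in> X" and z: "z \<in> X" and xy: "lt x y" and yz: "lt y z"
  shows "lt (lam x) (lam y) \<longleftrightarrow> lt (lam y) (lam z)"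
proof (rule ccontr)
  assume flip: "\<not> (lt (lam x) (lam y) \<longleftrightarrow> lt (lam y) (lam z))"
  have "lam x \<noteq> lam y" "lam y \<noteq> lam z" using lam_inj x y z xy yz by blast+
  then have "lam y \<noteq> lam x" "lam z \<noteq> lam y" by auto
  have "inc_jordan X le (\<phi> (e_unit x y)) (\<phi> (e_unit y z)) = (\<lambda>_ _. 0)"
  proof (cases "lt (lam x) (lam y)")
    case True
    then have "lt (lam z) (lam y)" using flip image_comparable[OF y z yz] by auto
    show ?thesis
      by (rule inc_jordan_single_entries_zero[OF phi_e_unit_support(1)[OF x y xy _ True]
            phi_e_unit_support(2)[OF y z yz _ \<open>lt (lam z) (lam y)\<close>]]) (assumption | fact)+
  next
    case False
    then have "lt (lam y) (lam x)" "lt (lam y) (lam z)"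
      using flip image_comparable[OF x y xy] by auto
    show ?thesis
      by (rule inc_jordan_single_entries_zero[OF phi_e_unit_support(2)[OF x y xy _ \<open>lt (lam y) (lam x)\<close>]
            phi_e_unit_support(1)[OF y z yz _ \<open>lt (lam y) (lam z)\<close>]]) (assumption | fact)+
  qed
  moreover have "\<phi> (e_unit x z) = inc_jordan X le (\<phi> (e_unit x y)) (\<phi> (e_unit y z))"
    using jordan_automorphism_inc_jordan[OF jordan e_unit_in_incidence[OF x y] e_unit_in_incidence[OF y z]]
    unfolding inc_jordan_e_unit_chain[OF x y z xy yz] using xy yz by simp
  moreover have "\<phi> (e_unit x z) \<noteq> (\<lambda>_ _. 0)"
    using phi_e_unit_nonzero x z lt_trans[OF x y z xy yz] by blast
  ultimately show False by simp
qed

lemma strict_comparability_map: "strict_comparability_map X le lam"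
  by unfold_locales (use image_comparable chain_orientation in auto)

end

theorem lemma4p2:
  fixes X :: "'a set" and le :: "'a \<Rightarrow> 'a \<Rightarrow> bool"
    and \<phi> :: "('a \<Rightarrow> 'a \<Rightarrow> 'f::field) \<Rightarrow> ('a \<Rightarrow> 'a \<Rightarrow> 'f)"
    and lam :: "'a \<Rightarrow> 'a"
  assumes "finite X" and "poset_on X le" and "connected_poset X le"
    and "jordan_automorphism X le \<phi>"
    and "bij_betw lam X X"
    and "\<forall>x\<in>X. \<phi> (e_unit x x) = e_unit (lam x) (lam x)"
  shows "order_automorphism X le lam \<or> order_anti_automorphism X le lam"
proof -
  interpret jordan_automorphism_permuting_units X le lam \<phi>
    using assms by unfold_locales auto
  show ?thesis
    by (rule strict_comparability_map.order_automorphism_or_anti_automorphism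
        [OF strict_comparability_map assms(3)])
qed

end
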